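(* Let $m\ge1$, $M=2^m$, $N\ge1$, and let bit probabilities $P_{C_0}(0),\ldots,P_{C_{m-1}}(0)\in(0,1)$ be given, with $P_{C_k}(1)=1-P_{C_k}(0)$. Let $\mathbb{X}$ have rows $\boldsymbol{x}_0,\ldots,\boldsymbol{x}_{M-1}\in\mathbb{R}^N$, let $\mathbb{S}=\mathring{\mathbb{X}}$ be its transform (rows $\boldsymbol{s}_i=\sum_{j}\boldsymbol{x}_j\gamma_{i,j}\sqrt{P_j}$), and let $\tilde{\mathbb{X}}$ and $\tilde{\mathbb{S}}$ be the Hadamard transforms of $\mathbb{X}$ and $\mathbb{S}$. Then $$\tilde{\boldsymbol{s}}_i=\psi_i\sum_{j=0}^{M-1}\tilde{\boldsymbol{x}}_j\prod_{\substack{k=0\\ n_{j,k}\ne n_{i,k}}}^{m-1}\big(P_{C_k}(0)-P_{C_k}(n_{j,k})\big),\qquad i=0,\ldots,M-1,$$ $$\tilde{\boldsymbol{x}}_j=\sum_{i=0}^{M-1}\frac{\tilde{\boldsymbol{s}}_i}{\psi_i}\prod_{\substack{k=0\\ n_{i,k}\ne n_{j,k}}}^{m-1}\big(P_{C_k}(n_{i,k})-P_{C_k}(0)\big),\qquad j=0,\ldots,M-1,$$ where $\psi_i=\prod_{k:\,n_{i,k}=1}2\sqrt{P_{C_k}(0)P_{C_k}(1)}$ and a product over the empty set equals $1$.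
   Context: For an integer $0\le i\le M-1$, $n_{i,k}\in\{0,1\}$ denotes the $k$-th bit of its base-2 representation ($i=\sum_k n_{i,k}2^k$); $\bar b=1-b$ for a bit $b$. Symbol probabilities: $P_i=\prod_{k=0}^{m-1}P_{C_k}(n_{i,k})$. Coefficients: $\gamma_{i,j}=\prod_{k=0}^{m-1}\big[(-1)^{\bar n_{i,k}n_{j,k}}\sqrt{P_{C_k}(0)}+(-1)^{n_{i,k}\bar n_{j,k}}\sqrt{P_{C_k}(1)}\big]$. Hadamard coefficients: $h_{i,j}=\prod_{k=0}^{m-1}(-1)^{n_{i,k}n_{j,k}}$. The Hadamard transform of a matrix with rows $\boldsymbol{x}_0,\ldots,\boldsymbol{x}_{M-1}$ is the matrix with rows $\tilde{\boldsymbol{x}}_i=\frac1M\sum_{j=0}^{M-1}\boldsymbol{x}_jh_{i,j}$. *)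

theory Defs
  imports "HOL-Analysis.Analysis"
begin

definition nbit :: "nat \<Rightarrow> nat \<Rightarrow> nat" where
  "nbit i k = (i div 2 ^ k) mod 2"

definition bbar :: "nat \<Rightarrow> nat" where
  "bbar b = 1 - b"

definition PC :: "(nat \<Rightarrow> real) \<Rightarrow> nat \<Rightarrow> nat \<Rightarrow> real" where
  "PC p k b = (if b = 0 then p k else 1 - p k)"

definition Psym :: "(nat \<Rightarrow> real) \<Rightarrow> nat \<Rightarrow> nat \<Rightarrow> real" where
  "Psym p m i = (\<Prod>k<m. PC p k (nbit i k))"

definition gam :: "(nat \<Rightarrow> real) \<Rightarrow> nat \<Rightarrow> nat \<Rightarrow> nat \<Rightarrow> real" where
  "gam p m i j = (\<Prod>k<m.
      (-1) ^ (bbar (nbit i k) * nbit j k) * sqrt (PC p k 0)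
    + (-1) ^ (nbit i k * bbar (nbit j k)) * sqrt (PC p k 1))"

definition had :: "nat \<Rightarrow> nat \<Rightarrow> nat \<Rightarrow> real" where
  "had m i j = (\<Prod>k<m. (-1) ^ (nbit i k * nbit j k))"

definition hadamard_tr :: "nat \<Rightarrow> (nat \<Rightarrow> 'a::real_vector) \<Rightarrow> nat \<Rightarrow> 'a" where
  "hadamard_tr m X i = (1 / 2 ^ m) *\<^sub>R (\<Sum>j<2 ^ m. had m i j *\<^sub>R X j)"

definition ring_tr :: "(nat \<Rightarrow> real) \<Rightarrow> nat \<Rightarrow> (nat \<Rightarrow> 'a::real_vector) \<Rightarrow> nat \<Rightarrow> 'a" where
  "ring_tr p m X i = (\<Sum>j<2 ^ m. (gam p m i j * sqrt (Psym p m j)) *\<^sub>R X j)"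

definition psi :: "(nat \<Rightarrow> real) \<Rightarrow> nat \<Rightarrow> nat \<Rightarrow> real" where
  "psi p m i = (\<Prod>k\<in>{k. k < m \<and> nbit i k = 1}. 2 * sqrt (PC p k 0 * PC p k 1))"

end

theory Submission imports Defs begin

text \<open>All matrices involved are Kronecker products of 2\<times>2 matrices, one per bit: the entries
  of the Hadamard matrix, of \<open>\<gamma>\<close>, of \<open>\<psi>\<close> and of the coefficient matrices of the theorem are
  products over \<open>k < m\<close> of a factor depending only on the \<open>k\<close>-th bits of the indices.
  A sum over all indices \<open>j < 2^m\<close> of such a product is the product over \<open>k\<close> of the two-term
  sums over the \<open>k\<close>-th bit, so each matrix identity reduces to a 2\<times>2 identity.  For the
  forward formula this is a direct computation with \<open>\<surd>P(0)\<close> and \<open>\<surd>P(1)\<close>; for the inverse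
  formula the two coefficient matrices turn out to be mutually inverse bit by bit.\<close>

lemma sum_lessThan_double:
  fixes g :: "nat \<Rightarrow> 'a::comm_monoid_add"
  shows "(\<Sum>j<n + n. g j) = (\<Sum>j<n. g j) + (\<Sum>j<n. g (n + j))"
proof -
  have "(\<Sum>j<n + n. g j) = (\<Sum>j\<in>{0..<n}. g j) + (\<Sum>j\<in>{n..<n + n}. g j)"
    using sum.atLeastLessThan_concat[of 0 n "n + n" g] by (simp add: atLeast0LessThan)
  also have "(\<Sum>j\<in>{n..<n + n}. g j) = (\<Sum>j<n. g (n + j))"
    using sum.shift_bounds_nat_ivl[of g 0 n n] by (simp add: atLeast0LessThan add.commute)
  finally show ?thesis by (simp add: atLeast0LessThan)
qed

lemma nbit_less_two: "nbit j k < 2"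
  by (simp add: nbit_def)

lemma nbit_eq_0_if_less_power: "j < 2 ^ m \<Longrightarrow> nbit j m = 0"
  by (simp add: nbit_def)

lemma nbit_power_add_self: "j < 2 ^ m \<Longrightarrow> nbit (2 ^ m + j) m = 1"
  by (simp add: nbit_def)

lemma nbit_power_add_low: "k < m \<Longrightarrow> nbit (2 ^ m + j) k = nbit j k"
proof -
  assume k: "k < m"
  have "(2::nat) ^ m = 2 ^ k * 2 ^ (m - k)" using k by (simp add: power_add[symmetric])
  then have "(2 ^ m + j) div 2 ^ k = 2 ^ (m - k) + j div 2 ^ k" by simp
  moreover obtain c where "(2::nat) ^ (m - k) = 2 * c" using k
    by (metis dvd_def dvd_power zero_less_diff)
  ultimately show ?thesis by (simp add: nbit_def)
qed

lemma nbit_eqI: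
  assumes "j < 2 ^ m" "l < 2 ^ m" "\<And>k. k < m \<Longrightarrow> nbit j k = nbit l k"
  shows "j = l"
proof (rule bit_eqI)
  fix n
  show "bit j n = bit l n"
  proof (cases "n < m")
    case True
    then show ?thesis using assms(3)[of n] by (simp add: bit_iff_odd nbit_def odd_iff_mod_2_eq_one)
  next
    case False
    then have "(2::nat) ^ m \<le> 2 ^ n" by simp
    then have "j < 2 ^ n" "l < 2 ^ n" using assms(1,2) by linarith+
    then show ?thesis by (simp add: bit_iff_odd)
  qed
qed

lemma sum_prod_nbit:
  fixes f :: "nat \<Rightarrow> nat \<Rightarrow> 'a::comm_semiring_1"
  shows "(\<Sum>j<2 ^ m. \<Prod>k<m. f k (nbit j k)) = (\<Prod>k<m. \<Sum>b<2. f k b)"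
proof (induction m)
  case 0
  then show ?case by simp
next
  case (Suc m)
  let ?S = "\<lambda>b. \<Sum>j<2 ^ m. (\<Prod>k<m. f k (nbit j k)) * f m b"
  have "(\<Sum>j<2 ^ Suc m. \<Prod>k<Suc m. f k (nbit j k))
      = (\<Sum>j<2 ^ m. \<Prod>k<Suc m. f k (nbit j k)) + (\<Sum>j<2 ^ m. \<Prod>k<Suc m. f k (nbit (2 ^ m + j) k))"
    using sum_lessThan_double[of "\<lambda>j. \<Prod>k<Suc m. f k (nbit j k)" "2 ^ m"] by (simp add: mult_2)
  also have "(\<Sum>j<2 ^ m. \<Prod>k<Suc m. f k (nbit j k)) = ?S 0"
    by (rule sum.cong) (simp_all add: nbit_eq_0_if_less_power)
  also have "(\<Sum>j<2 ^ m. \<Prod>k<Suc m. f k (nbit (2 ^ m + j) k)) = ?S 1"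
    by (rule sum.cong) (simp_all add: nbit_power_add_self nbit_power_add_low)
  also have "?S 0 + ?S 1 = (\<Prod>k<m. \<Sum>b<2. f k b) * (f m 0 + f m 1)"
    by (simp only: sum_distrib_right[symmetric] Suc.IH distrib_left)
  also have "\<dots> = (\<Prod>k<Suc m. \<Sum>b<2. f k b)"
    by (simp add: numeral_2_eq_2 lessThan_Suc ac_simps)
  finally show ?case .
qed

lemma prod_nbit_eq_indicator:
  assumes "j < 2 ^ m" "l < 2 ^ m"
  shows "(\<Prod>k<m. if nbit j k = nbit l k then 1 else 0 :: 'a::comm_semiring_1)
       = (if j = l then 1 else 0)"
proof (cases "j = l")
  case False
  then obtain k where "k < m" "nbit j k \<noteq> nbit l k" using nbit_eqI[OF assms] by blast
  then show ?thesis using False by (auto intro!: prod_zero)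
qed simp

lemma prod_Collect_less_eq_prod_if:
  fixes m :: nat
  shows "(\<Prod>k\<in>{k. k < m \<and> P k}. g k) = (\<Prod>k<m. if P k then g k else 1)"
proof -
  have "{k. k < m \<and> P k} = {k\<in>{..<m}. P k}" by auto
  then have "(\<Prod>k\<in>{k. k < m \<and> P k}. g k) = (\<Prod>k\<in>{k\<in>{..<m}. P k}. g k)" by simp
  also have "\<dots> = (\<Prod>k<m. if P k then g k else 1)" by (rule prod.inter_filter) simp
  finally show ?thesis .
qed

lemma real_sqrt_prod: fixes m :: nat shows "sqrt (\<Prod>k<m. f k) = (\<Prod>k<m. sqrt (f k))"
  by (induction m) (simp_all add: real_sqrt_mult)

lemma sum_scaleR_sum_swap:
  fixes X :: "nat \<Rightarrow> 'a::real_vector"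
  shows "(\<Sum>j\<in>A. c j *\<^sub>R (\<Sum>l\<in>B. d j l *\<^sub>R X l)) = (\<Sum>l\<in>B. (\<Sum>j\<in>A. c j * d j l) *\<^sub>R X l)"
  by (simp add: scaleR_sum_right scaleR_sum_left sum.swap[of _ A])

lemma hadamard_tr_eq_sum: "hadamard_tr m Y i = (\<Sum>j<2 ^ m. (1 / 2 ^ m * had m i j) *\<^sub>R Y j)"
  by (simp add: hadamard_tr_def scaleR_sum_right)

lemma psi_pos:
  assumes "\<And>k. k < m \<Longrightarrow> 0 < p k \<and> p k < 1"
  shows "0 < psi p m i"
  unfolding psi_def by (rule prod_pos) (use assms in \<open>auto simp: PC_def\<close>)

lemma psi_eq_prod_if:
  "psi p m i = (\<Prod>k<m. if nbit i k = 1 then 2 * sqrt (PC p k 0 * PC p k 1) else 1)"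
  unfolding psi_def by (rule prod_Collect_less_eq_prod_if)

definition had_ring_coeff :: "(nat \<Rightarrow> real) \<Rightarrow> nat \<Rightarrow> nat \<Rightarrow> nat \<Rightarrow> real" where
  "had_ring_coeff p m i j = (\<Prod>k\<in>{k. k < m \<and> nbit j k \<noteq> nbit i k}. PC p k 0 - PC p k (nbit j k))"

definition had_ring_inv_coeff :: "(nat \<Rightarrow> real) \<Rightarrow> nat \<Rightarrow> nat \<Rightarrow> nat \<Rightarrow> real" where
  "had_ring_inv_coeff p m i j = (\<Prod>k\<in>{k. k < m \<and> nbit i k \<noteq> nbit j k}. PC p k (nbit i k) - PC p k 0)"

lemma hadamard_gam_bit:
  assumes "0 < p k" "p k < 1" and "x < 2" "z < 2"
  shows "(\<Sum>y<2. 1/2 * (-1) ^ (x * y) * ((-1) ^ (bbar y * z) * sqrt (PC p k 0)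
                + (-1) ^ (y * bbar z) * sqrt (PC p k 1)) * sqrt (PC p k z))
       = (\<Sum>y<2. (if x = 1 then 2 * sqrt (PC p k 0 * PC p k 1) else 1)
                * (if y \<noteq> x then PC p k 0 - PC p k y else 1) * (1/2 * (-1) ^ (y * z)))"
proof -
  define q where "q = p k"
  have PC_q: "PC p k = (\<lambda>b. if b = 0 then q else 1 - q)" by (simp add: PC_def q_def fun_eq_iff)
  have q: "0 < q" "q < 1" using assms(1,2) by (simp_all add: q_def)
  have sq: "sqrt q * sqrt q = q" "sqrt (1 - q) * sqrt (1 - q) = 1 - q" "\<bar>q\<bar> = q" "\<bar>1 - q\<bar> = 1 - q"
    using q by simp_all
  have sqrt_mult: "sqrt (q * (1 - q)) = sqrt q * sqrt (1 - q)" "sqrt (q - q * q) = sqrt q * sqrt (1 - q)"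
    by (simp_all add: real_sqrt_mult[symmetric] algebra_simps)
  have two: "{..<2::nat} = {0, 1}" by auto
  have "x = 0 \<or> x = 1" "z = 0 \<or> z = 1" using assms(3,4) by auto
  then show ?thesis unfolding PC_q
    by (auto simp: two bbar_def sq sqrt_mult algebra_simps) (simp_all add: field_simps)
qed

lemma hadamard_ring_tr_matrix:
  assumes "\<And>k. k < m \<Longrightarrow> 0 < p k \<and> p k < 1"
  shows "(\<Sum>j<2 ^ m. (1 / 2 ^ m * had m i j) * (gam p m j l * sqrt (Psym p m l)))
       = (\<Sum>j<2 ^ m. psi p m i * had_ring_coeff p m i j * (1 / 2 ^ m * had m j l))"
proof -
  define F where "F k x y z = 1/2 * (-1) ^ (x * y) * ((-1) ^ (bbar y * z) * sqrt (PC p k 0)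
                + (-1) ^ (y * bbar z) * sqrt (PC p k 1)) * sqrt (PC p k z)" for k x y z
  define G where "G k x y z = (if x = 1 then 2 * sqrt (PC p k 0 * PC p k 1) else 1)
                * (if y \<noteq> x then PC p k 0 - PC p k y else 1) * (1/2 * (-1::real) ^ (y * z))"
    for k x y z
  have "(\<Sum>j<2 ^ m. (1 / 2 ^ m * had m i j) * (gam p m j l * sqrt (Psym p m l)))
      = (\<Sum>j<2 ^ m. \<Prod>k<m. F k (nbit i k) (nbit j k) (nbit l k))"
    unfolding F_def prod.distrib
    by (rule sum.cong) (simp_all add: had_def gam_def Psym_def real_sqrt_prod power_one_over mult_ac)
  also have "\<dots> = (\<Prod>k<m. \<Sum>y<2. F k (nbit i k) y (nbit l k))"
    by (rule sum_prod_nbit)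
  also have "\<dots> = (\<Prod>k<m. \<Sum>y<2. G k (nbit i k) y (nbit l k))"
  proof (rule prod.cong[OF refl])
    fix k assume "k \<in> {..<m}"
    then show "(\<Sum>y<2. F k (nbit i k) y (nbit l k)) = (\<Sum>y<2. G k (nbit i k) y (nbit l k))"
      unfolding F_def G_def using assms by (intro hadamard_gam_bit) (simp_all add: nbit_less_two)
  qed
  also have "\<dots> = (\<Sum>j<2 ^ m. \<Prod>k<m. G k (nbit i k) (nbit j k) (nbit l k))"
    by (rule sum_prod_nbit[symmetric])
  also have "\<dots> = (\<Sum>j<2 ^ m. psi p m i * had_ring_coeff p m i j * (1 / 2 ^ m * had m j l))"
    unfolding G_def prod.distrib
    by (rule sum.cong) (simp_all add: had_ring_coeff_def psi_eq_prod_if prod_Collect_less_eq_prod_if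
        had_def power_one_over mult_ac)
  finally show ?thesis .
qed

lemma hadamard_tr_ring_tr:
  fixes X :: "nat \<Rightarrow> 'a::real_vector"
  assumes "\<And>k. k < m \<Longrightarrow> 0 < p k \<and> p k < 1"
  shows "hadamard_tr m (ring_tr p m X) i
       = psi p m i *\<^sub>R (\<Sum>j<2 ^ m. had_ring_coeff p m i j *\<^sub>R hadamard_tr m X j)"
proof -
  have "hadamard_tr m (ring_tr p m X) i
      = (\<Sum>l<2 ^ m. (\<Sum>j<2 ^ m. (1 / 2 ^ m * had m i j) * (gam p m j l * sqrt (Psym p m l))) *\<^sub>R X l)"
    unfolding hadamard_tr_eq_sum ring_tr_def by (rule sum_scaleR_sum_swap)
  also have "\<dots> = (\<Sum>l<2 ^ m. (\<Sum>j<2 ^ m. psi p m i * had_ring_coeff p m i j * (1 / 2 ^ m * had m j l)) *\<^sub>R X l)"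
    using hadamard_ring_tr_matrix[OF assms] by simp
  also have "\<dots> = psi p m i *\<^sub>R (\<Sum>l<2 ^ m. (\<Sum>j<2 ^ m. had_ring_coeff p m i j * (1 / 2 ^ m * had m j l)) *\<^sub>R X l)"
    by (simp add: scaleR_sum_right sum_distrib_left mult.assoc)
  also have "\<dots> = psi p m i *\<^sub>R (\<Sum>j<2 ^ m. had_ring_coeff p m i j *\<^sub>R hadamard_tr m X j)"
    unfolding hadamard_tr_eq_sum sum_scaleR_sum_swap ..
  finally show ?thesis .
qed

lemma had_ring_inv_coeff_bit:
  assumes "b < 2" "c < 2"
  shows "(\<Sum>y<2. (if y \<noteq> b then PC p k y - PC p k 0 else 1)
               * (if c \<noteq> y then PC p k 0 - PC p k c else 1)) = (if b = c then 1 else 0)"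
proof -
  have "{..<2::nat} = {0, 1}" "b = 0 \<or> b = 1" "c = 0 \<or> c = 1" using assms by auto
  then show ?thesis by (auto simp: PC_def)
qed

lemma had_ring_inv_coeff_mult_coeff:
  assumes "j < 2 ^ m" "l < 2 ^ m"
  shows "(\<Sum>i<2 ^ m. had_ring_inv_coeff p m i j * had_ring_coeff p m i l) = (if j = l then 1 else 0)"
proof -
  have "(\<Sum>i<2 ^ m. had_ring_inv_coeff p m i j * had_ring_coeff p m i l)
      = (\<Sum>i<2 ^ m. \<Prod>k<m. (if nbit i k \<noteq> nbit j k then PC p k (nbit i k) - PC p k 0 else 1)
             * (if nbit l k \<noteq> nbit i k then PC p k 0 - PC p k (nbit l k) else 1))"
    by (simp add: had_ring_inv_coeff_def had_ring_coeff_def prod_Collect_less_eq_prod_if prod.distrib)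
  also have "\<dots> = (\<Prod>k<m. \<Sum>y<2. (if y \<noteq> nbit j k then PC p k y - PC p k 0 else 1)
             * (if nbit l k \<noteq> y then PC p k 0 - PC p k (nbit l k) else 1))"
    by (rule sum_prod_nbit)
  also have "\<dots> = (\<Prod>k<m. if nbit j k = nbit l k then 1 else 0)"
    by (simp add: had_ring_inv_coeff_bit nbit_less_two)
  also have "\<dots> = (if j = l then 1 else 0)"
    by (rule prod_nbit_eq_indicator[OF assms])
  finally show ?thesis .
qed

lemma hadamard_tr_eq_sum_hadamard_tr_ring_tr:
  fixes X :: "nat \<Rightarrow> 'a::real_vector"
  assumes "\<And>k. k < m \<Longrightarrow> 0 < p k \<and> p k < 1" and "j < 2 ^ m"
  shows "hadamard_tr m X j
       = (\<Sum>i<2 ^ m. (1 / psi p m i * had_ring_inv_coeff p m i j) *\<^sub>R hadamard_tr m (ring_tr p m X) i)"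
proof -
  have "(\<Sum>i<2 ^ m. (1 / psi p m i * had_ring_inv_coeff p m i j) *\<^sub>R hadamard_tr m (ring_tr p m X) i)
      = (\<Sum>i<2 ^ m. had_ring_inv_coeff p m i j *\<^sub>R (\<Sum>l<2 ^ m. had_ring_coeff p m i l *\<^sub>R hadamard_tr m X l))"
    using psi_pos[OF assms(1)] by (simp add: hadamard_tr_ring_tr[OF assms(1)] less_imp_neq[symmetric])
  also have "\<dots> = (\<Sum>l<2 ^ m. (\<Sum>i<2 ^ m. had_ring_inv_coeff p m i j * had_ring_coeff p m i l) *\<^sub>R hadamard_tr m X l)"
    by (rule sum_scaleR_sum_swap)
  also have "\<dots> = (\<Sum>l<2 ^ m. (if j = l then 1 else 0) *\<^sub>R hadamard_tr m X l)"
    by (rule sum.cong) (simp_all add: had_ring_inv_coeff_mult_coeff assms(2))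
  also have "\<dots> = hadamard_tr m X j"
    using assms(2) by (simp add: if_distrib[of "\<lambda>c. c *\<^sub>R _"] cong: if_cong)
  finally show ?thesis by simp
qed

theorem theorem2:
  fixes m :: nat and p :: "nat \<Rightarrow> real" and X :: "nat \<Rightarrow> real ^ 'n"
  assumes "m \<ge> 1"
    and "\<And>k. k < m \<Longrightarrow> 0 < p k \<and> p k < 1"
  shows "(\<forall>i < 2 ^ m.
           hadamard_tr m (ring_tr p m X) i =
             psi p m i *\<^sub>R (\<Sum>j<2 ^ m.
               (\<Prod>k\<in>{k. k < m \<and> nbit j k \<noteq> nbit i k}. PC p k 0 - PC p k (nbit j k))
                 *\<^sub>R hadamard_tr m X j))
       \<and> (\<forall>j < 2 ^ m.
           hadamard_tr m X j =
             (\<Sum>i<2 ^ m.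
               ((1 / psi p m i) *
                 (\<Prod>k\<in>{k. k < m \<and> nbit i k \<noteq> nbit j k}. PC p k (nbit i k) - PC p k 0))
                 *\<^sub>R hadamard_tr m (ring_tr p m X) i))"
  using hadamard_tr_ring_tr[of m p, OF assms(2)]
    hadamard_tr_eq_sum_hadamard_tr_ring_tr[of m p, OF assms(2)]
  unfolding had_ring_coeff_def had_ring_inv_coeff_def by blast

end
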